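(* Let $n\ge 2$ and let $S=\{A_1,\dots,A_m\}$ be a finite set of real $n\times n$ matrices such that every $A\in S$ satisfies $A\mathbf{1}=\mathbf{1}$ and $\|Ax\|_{\mathcal{P}}\le\|x\|_{\mathcal{P}}$ for all $x$. Then the switched system $x(t+1)=A_{\sigma(t)}x(t)$ converges to a multiple of $\mathbf{1}$ for every initial condition $x(0)=x_0\in\mathbb{R}^n$ and every sequence $\sigma:\mathbb{N}\to\{1,\dots,m\}$ if and only if the self-loop of node 1 is the only cycle in the graph of faces $\mathcal{G}$ of $S$.
   Context: $\mathbf{1}=(1,\dots,1)^\top$, $\|x\|_{\mathcal{P}}=\tfrac12(\max_i x_i-\min_i x_i)$, $\mathcal{P}=\{x:\|x\|_{\mathcal{P}}\le 1\}$, which satisfies $\mathcal{P}=-\mathcal{P}$. A face of a polyhedron $\mathcal{Q}$ is a non-empty subset $F$ with $F=\mathcal{Q}$ or $F=\mathcal{Q}\cap\{x:b^\top x=c\}$ where $b^\top x\le c$ on $\mathcal{Q}$; an open face is the relative interior of a face; a proper open face is the relative interior of a face other than $\mathcal{Q}$. If $F$ is a proper open face of $\mathcal{P}$, so is $-F$, and $\pm F$ denotes $F\cup(-F)$. The graph of faces $\mathcal{G}$ is the directed graph with one node for each pair $\{F,-F\}$ of opposite proper open faces of $\mathcal{P}$ and one additional node, "node 1", representing $\operatorname{int}(\mathcal{P})$; there is an edge from the node of $F_i$ to the node of $F_j$ whenever some $A\in S$ satisfies $AF_i\subseteq\pm F_j$ (self-loops allowed), an edge from the node of $F_i$ to node 1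 whenever some $A\in S$ satisfies $AF_i\subseteq\operatorname{int}(\mathcal{P})$, and a self-loop at node 1. *)

theory Defs
  imports "HOL-Analysis.Analysis"
begin

definition ones :: "real ^ 'n" where
  "ones = vec 1"

definition normP :: "real ^ 'n \<Rightarrow> real" where
  "normP x = (Max (range (\<lambda>i. x $ i)) - Min (range (\<lambda>i. x $ i))) / 2"

definition Pset :: "(real ^ 'n) set" where
  "Pset = {x. normP x \<le> 1}"

definition is_face :: "(real ^ 'n) set \<Rightarrow> (real ^ 'n) set \<Rightarrow> bool" where
  "is_face Q F \<longleftrightarrow> F \<noteq> {} \<and>
     (F = Q \<or> (\<exists>b c. (\<forall>x\<in>Q. inner b x \<le> c) \<and> F = Q \<inter> {x. inner b x = c}))"

definition proper_open_face :: "(real ^ 'n) set \<Rightarrow> bool" where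
  "proper_open_face G \<longleftrightarrow> (\<exists>F. is_face Pset F \<and> F \<noteq> Pset \<and> G = rel_interior F)"

text \<open>Nodes of the graph of faces: None is node 1 (interior of P),
  Some {F, -F} is the node of the pair of opposite proper open faces.\<close>
definition face_node :: "(real ^ 'n) set \<Rightarrow> (real ^ 'n) set set option" where
  "face_node F = Some {F, uminus ` F}"

definition graph_of_faces ::
  "(real ^ 'n ^ 'n) set \<Rightarrow> ((real ^ 'n) set set option \<times> (real ^ 'n) set set option) set" where
  "graph_of_faces S =
     {(face_node Fi, face_node Fj) | Fi Fj. proper_open_face Fi \<and> proper_open_face Fj \<and>
        (\<exists>A\<in>S. (\<lambda>x. A *v x) ` Fi \<subseteq> Fj \<union> uminus ` Fj)}
   \<union> {(face_node Fi, None) | Fi. proper_open_face Fi \<and>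
        (\<exists>A\<in>S. (\<lambda>x. A *v x) ` Fi \<subseteq> interior Pset)}
   \<union> {(None, None)}"

definition only_cycle_is_node1_loop :: "(real ^ 'n ^ 'n) set \<Rightarrow> bool" where
  "only_cycle_is_node1_loop S \<longleftrightarrow> (\<forall>v. (v, v) \<in> (graph_of_faces S)\<^sup>+ \<longrightarrow> v = None)"

primrec traj :: "(nat \<Rightarrow> real ^ 'n ^ 'n) \<Rightarrow> real ^ 'n \<Rightarrow> nat \<Rightarrow> real ^ 'n" where
  "traj \<sigma> x0 0 = x0"
| "traj \<sigma> x0 (Suc t) = \<sigma> t *v traj \<sigma> x0 t"

end

theory Submission
  imports Defs
begin

text \<open>
  Every \<open>A \<in> S\<close> maps \<open>\<P>\<close> into itself and \<open>int \<P>\<close> into itself, and, being linear, it maps each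
  proper open face of \<open>\<P>\<close> into a single open face: either into \<open>int \<P>\<close> or into some \<open>\<pm>F\<close>, which
  is an edge of \<open>\<G>\<close>. If a node \<open>{F, -F}\<close> lies on a cycle, one can choose the matrices so that a
  trajectory starting in \<open>F\<close> stays on the boundary of \<open>\<P>\<close> forever; its seminorm is then constantly
  1 and it cannot converge to a multiple of \<open>\<one>\<close>. Conversely, if there is no such cycle, a
  trajectory of length \<open>L = #nodes + 1\<close> cannot stay on the boundary, because the walk it traces
  in \<open>\<G>\<close> would repeat a node. By compactness and homogeneity every product of \<open>L\<close> matrices from
  \<open>S\<close> then contracts the seminorm by a uniform factor \<open>q < 1\<close>, so the seminorm decays
  geometrically; the increments \<open>x(t+1) - x(t)\<close> are bounded by a multiple of the seminorm, hence
  summable, and the limit has seminorm 0.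
\<close>

section \<open>The seminorm\<close>

definition max_entry :: "real^'n \<Rightarrow> real" where
  "max_entry x = Max (range (\<lambda>i. x $ i))"

definition min_entry :: "real^'n \<Rightarrow> real" where
  "min_entry x = Min (range (\<lambda>i. x $ i))"

lemma normP_eq: "normP x = (max_entry x - min_entry x) / 2"
  by (simp add: normP_def max_entry_def min_entry_def)

lemma entry_le_max_entry: "x $ i \<le> max_entry x"
  unfolding max_entry_def by (rule Max_ge) auto

lemma min_entry_le_entry: "min_entry x \<le> x $ i"
  unfolding min_entry_def by (rule Min_le) auto

lemma max_entry_attained: obtains i where "x $ i = max_entry x"
proof -
  have "max_entry x \<in> range (\<lambda>i. x $ i)" unfolding max_entry_def by (rule Max_in) auto
  then show ?thesis using that by auto
qed

lemma min_entry_attained: obtains i where "x $ i = min_entry x"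
proof -
  have "min_entry x \<in> range (\<lambda>i. x $ i)" unfolding min_entry_def by (rule Min_in) auto
  then show ?thesis using that by auto
qed

lemma entry_diff_le_normP: "x $ i - x $ j \<le> 2 * normP x"
  using entry_le_max_entry[of x i] min_entry_le_entry[of x j] by (simp add: normP_eq)

lemma normP_le_iff: "normP x \<le> r \<longleftrightarrow> (\<forall>i j. x $ i - x $ j \<le> 2 * r)"
proof
  assume "normP x \<le> r"
  then show "\<forall>i j. x $ i - x $ j \<le> 2 * r"
    using entry_diff_le_normP[of x] by (meson order_trans mult_left_mono zero_le_numeral)
next
  assume "\<forall>i j. x $ i - x $ j \<le> 2 * r"
  moreover obtain i j where "x $ i = max_entry x" "x $ j = min_entry x"
    using max_entry_attained min_entry_attained by metis
  ultimately have "max_entry x - min_entry x \<le> 2 * r" by metis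
  then show "normP x \<le> r" by (simp add: normP_eq)
qed

lemma normP_nonneg: "normP x \<ge> 0"
  using entry_diff_le_normP[of x undefined undefined] by simp

lemma normP_uminus: "normP (- x) = normP x"
proof -
  have "normP (- x) \<le> r \<longleftrightarrow> normP x \<le> r" for r
    unfolding normP_le_iff by (simp add: algebra_simps) blast
  then show ?thesis by (meson order_antisym order_refl)
qed

lemma normP_eq_scaled_differences:
  assumes "c \<ge> 0" "\<And>i j. y $ i - y $ j = c * (x $ i - x $ j)"
  shows "normP y = c * normP x"
proof (rule order_antisym)
  show "normP y \<le> c * normP x"
    unfolding normP_le_iff assms(2) using assms(1) entry_diff_le_normP[of x]
    by (metis mult.left_commute mult_left_mono)
  obtain i j where "x $ i = max_entry x" "x $ j = min_entry x"
    using max_entry_attained min_entry_attained by metis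
  then have "c * normP x = (y $ i - y $ j) / 2" by (simp add: assms(2) normP_eq)
  also have "\<dots> \<le> normP y" using entry_diff_le_normP[of y i j] by simp
  finally show "c * normP x \<le> normP y" .
qed

lemma normP_affine: "c \<ge> 0 \<Longrightarrow> normP (c *\<^sub>R x + d *\<^sub>R ones) = c * normP x"
  by (rule normP_eq_scaled_differences) (simp_all add: ones_def algebra_simps)

lemma normP_scaleR_ones: "normP (c *\<^sub>R ones) = 0"
  using normP_affine[of 0 0 c] by simp

lemma normP_zero: "normP 0 = 0"
  using normP_scaleR_ones[of 0] by simp

lemma normP_eq_0_iff: "normP x = 0 \<longleftrightarrow> (\<exists>c. x = c *\<^sub>R ones)"
proof
  assume "normP x = 0"
  then have const: "x $ i = x $ k" for i k
    using entry_diff_le_normP[of x i k] entry_diff_le_normP[of x k i] by simp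
  have "x = (x $ k) *\<^sub>R ones" for k
    unfolding vec_eq_iff ones_def by (auto intro: const)
  then show "\<exists>c. x = c *\<^sub>R ones" by blast
qed (auto simp: normP_scaleR_ones)

lemma normP_add: "normP (x + y) \<le> normP x + normP y"
  unfolding normP_le_iff
  using add_mono[OF entry_diff_le_normP[of x] entry_diff_le_normP[of y]] by (simp add: algebra_simps)

lemma normP_le_norm: "normP x \<le> norm x"
  unfolding normP_le_iff
  using component_le_norm_cart[of x] by (smt (verit))

lemma continuous_on_normP: "continuous_on U normP"
proof (rule lipschitz_on_continuous_on)
  have "normP x \<le> normP y + norm (x - y)" for x y :: "real^'n"
    using normP_add[of y "x - y"] normP_le_norm[of "x - y"] by simp
  then have "\<bar>normP x - normP y\<bar> \<le> norm (x - y)" for x y :: "real^'n"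
    using norm_minus_commute[of x y] by (smt (verit))
  then show "1-lipschitz_on U normP"
    by (intro lipschitz_onI) (simp_all add: dist_norm dist_real_def)
qed

lemma isCont_normP: "isCont normP x"
  using continuous_on_normP continuous_on_eq_continuous_at by blast

section \<open>The polyhedron \<open>\<P>\<close> and its open faces\<close>

lemma Pset_eq_Inter_halfspaces:
  "Pset = (\<Inter>(i, j). {x. (axis i 1 - axis j 1) \<bullet> x \<le> (2::real)})"
  by (auto simp: Pset_def normP_le_iff inner_diff_left inner_axis')

lemma polyhedron_Pset: "polyhedron Pset"
  unfolding Pset_eq_Inter_halfspaces
  by (intro polyhedron_Inter) (auto intro: polyhedron_halfspace_le)

lemma convex_Pset: "convex Pset"
  using polyhedron_Pset polyhedron_imp_convex by blast

lemma interior_Pset: "interior Pset = {x. normP x < 1}"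
proof
  have "open {x. normP x < 1}"
    by (rule open_Collect_less) (use continuous_on_normP in auto)
  then show "{x. normP x < 1} \<subseteq> interior Pset"
    by (rule interior_maximal[rotated]) (auto simp: Pset_def)
next
  show "interior Pset \<subseteq> {x. normP x < 1}"
  proof
    fix x :: "real^'n" assume x: "x \<in> interior Pset"
    then obtain e where e: "e > 0" "ball x e \<subseteq> Pset" using mem_interior by blast
    obtain i j where ij: "x $ i = max_entry x" "x $ j = min_entry x"
      using max_entry_attained min_entry_attained by metis
    \<comment> \<open>pushing the largest entry up by \<open>e/2\<close> stays in \<open>\<P>\<close>, so \<open>x\<close> had slack\<close>
    define y where "y = x + (e/2) *\<^sub>R axis i 1"
    have "y \<in> Pset" using e by (auto simp: y_def dist_norm intro!: subsetD[OF e(2)])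
    then have "y $ i - y $ j \<le> 2" by (simp add: Pset_def normP_le_iff)
    moreover have "i \<noteq> j \<Longrightarrow> y $ i - y $ j = x $ i - x $ j + e/2" by (simp add: y_def axis_def)
    ultimately show "x \<in> {x. normP x < 1}" using ij e by (cases "i = j") (auto simp: normP_eq)
  qed
qed

lemma rel_interior_Pset: "rel_interior Pset = interior Pset"
proof -
  have "(0::real^'n) \<in> interior Pset"
    unfolding interior_Pset by (simp add: normP_zero)
  then show ?thesis by (intro rel_interior_nonempty_interior) auto
qed

lemma polyhedron_mem_rel_interior_face:
  fixes P :: "'a::euclidean_space set"
  assumes P: "polyhedron P" and x: "x \<in> P"
  obtains F where "F face_of P" "x \<in> rel_interior F"
proof -
  \<comment> \<open>the smallest face containing \<open>x\<close>: a facet of it through \<open>x\<close> would be a smaller one\<close>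
  define F where "F = \<Inter>{F. F face_of P \<and> x \<in> F}"
  have PP: "P face_of P" using P polyhedron_imp_convex face_of_refl by blast
  have F: "F face_of P" unfolding F_def by (rule face_of_Inter) (use PP x in auto)
  have xF: "x \<in> F" unfolding F_def by auto
  have "x \<in> rel_interior F"
  proof (rule ccontr)
    assume "x \<notin> rel_interior F"
    then obtain G where G: "G facet_of F" "x \<in> G"
      using xF rel_boundary_of_polyhedron[OF face_of_polyhedron_polyhedron[OF P F]] by blast
    then have "G face_of P" using face_of_trans[OF facet_of_imp_face_of F] by blast
    then have "F \<subseteq> G" using G(2) unfolding F_def by (intro Inter_lower) simp
    then show False using G(1) facet_of_imp_subset[OF G(1)] by (simp add: facet_of_irrefl subset_antisym)
  qed
  then show ?thesis using F that by blast
qed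

lemma relatively_open_subset_rel_interior_face:
  fixes P :: "'a::euclidean_space set"
  assumes P: "polyhedron P" and C: "C \<subseteq> P" "rel_interior C = C" "C \<noteq> {}"
  obtains F where "F face_of P" "C \<subseteq> rel_interior F"
proof -
  have face_of_point: "\<exists>F. F face_of P \<and> z \<in> rel_interior F \<and> C \<subseteq> F" if z: "z \<in> C" for z
  proof -
    obtain F where F: "F face_of P" "z \<in> rel_interior F"
      using polyhedron_mem_rel_interior_face[OF P] z C(1) by blast
    have "F \<inter> rel_interior C \<noteq> {}" using F(2) C(2) z rel_interior_subset by auto
    then show ?thesis using subset_of_face_of[OF F(1) C(1)] F by blast
  qed
  obtain y where y: "y \<in> C" using C(3) by blast
  obtain F where F: "F face_of P" "y \<in> rel_interior F" "C \<subseteq> F" using face_of_point[OF y] by blast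
  have "z \<in> rel_interior F" if z: "z \<in> C" for z
  proof -
    obtain G where G: "G face_of P" "z \<in> rel_interior G" "C \<subseteq> G" using face_of_point[OF z] by blast
    have "F \<subseteq> G" using subset_of_face_of[OF G(1) face_of_imp_subset[OF F(1)]] F(2) G(3) y by auto
    moreover have "G \<subseteq> F" using subset_of_face_of[OF F(1) face_of_imp_subset[OF G(1)]] G(2) F(3) z by auto
    ultimately show ?thesis using G(2) by simp
  qed
  then show ?thesis using that F(1) by blast
qed

lemma linear_image_rel_interior_face:
  fixes P :: "'a::euclidean_space set"
  assumes P: "polyhedron P" and f: "linear f" "f ` P \<subseteq> P" and F: "F face_of P" "F \<noteq> {}"
  obtains F' where "F' face_of P" "f ` rel_interior F \<subseteq> rel_interior F'"
proof (rule relatively_open_subset_rel_interior_face[OF P])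
  have "convex F" using F(1) face_of_imp_convex by blast
  then have C: "f ` rel_interior F = rel_interior (f ` F)" "convex (f ` F)"
    using rel_interior_convex_linear_image[OF f(1)] convex_linear_image[OF f(1)] by auto
  show "f ` rel_interior F \<subseteq> P"
    using f(2) rel_interior_subset face_of_imp_subset[OF F(1)] by blast
  show "rel_interior (f ` rel_interior F) = f ` rel_interior F"
    using C rel_interior_rel_interior by simp
  show "f ` rel_interior F \<noteq> {}"
    by (simp add: rel_interior_eq_empty[OF \<open>convex F\<close>] F(2))
qed

lemma is_face_Pset_iff: "is_face Pset F \<longleftrightarrow> F \<noteq> {} \<and> F face_of Pset"
proof -
  have "F face_of Pset \<longleftrightarrow> F = Pset \<or> (\<exists>b c. (\<forall>x\<in>Pset. b \<bullet> x \<le> c) \<and> F = Pset \<inter> {x. b \<bullet> x = c})"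
  proof
    assume "F face_of Pset"
    then obtain b c where "Pset \<subseteq> {x. b \<bullet> x \<le> c}" "F = Pset \<inter> {x. b \<bullet> x = c}"
      using exposed_face_of_polyhedron[OF polyhedron_Pset] unfolding exposed_face_of_def by blast
    then show "F = Pset \<or> (\<exists>b c. (\<forall>x\<in>Pset. b \<bullet> x \<le> c) \<and> F = Pset \<inter> {x. b \<bullet> x = c})"
      by blast
  qed (use face_of_refl[OF convex_Pset] exposed_face_of_Int_supporting_hyperplane_le[OF convex_Pset]
      in \<open>auto simp: exposed_face_of_def\<close>)
  then show ?thesis unfolding is_face_def by blast
qed

lemma proper_open_face_iff:
  "proper_open_face G \<longleftrightarrow> (\<exists>F. F face_of Pset \<and> F \<noteq> {} \<and> F \<noteq> Pset \<and> G = rel_interior F)"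
  unfolding proper_open_face_def is_face_Pset_iff by blast

lemma proper_open_face_nonempty: "proper_open_face G \<Longrightarrow> G \<noteq> {}"
  unfolding proper_open_face_iff using rel_interior_eq_empty face_of_imp_convex by blast

lemma normP_proper_open_face:
  assumes "proper_open_face G" "x \<in> G"
  shows "normP x = 1"
proof -
  obtain F where F: "F face_of Pset" "F \<noteq> Pset" "G = rel_interior F"
    using assms(1) unfolding proper_open_face_iff by blast
  have "x \<in> F" using assms(2) F(3) rel_interior_subset by blast
  then have "x \<notin> interior Pset" "x \<in> Pset"
    using face_of_disjoint_interior[OF F(1,2)] face_of_imp_subset[OF F(1)] by auto
  then show ?thesis unfolding interior_Pset unfolding Pset_def by simp
qed

lemma proper_open_face_cover:
  assumes "normP x = 1"
  obtains G where "proper_open_face G" "x \<in> G"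
proof -
  have "x \<in> Pset" using assms by (simp add: Pset_def)
  then obtain F where F: "F face_of Pset" "x \<in> rel_interior F"
    by (rule polyhedron_mem_rel_interior_face[OF polyhedron_Pset])
  have "F \<noteq> Pset" using F(2) assms by (auto simp: rel_interior_Pset interior_Pset)
  moreover have "F \<noteq> {}" using F(2) rel_interior_subset by blast
  ultimately show ?thesis using F that unfolding proper_open_face_iff by blast
qed

lemma finite_proper_open_faces: "finite {G :: (real^'n) set. proper_open_face G}"
proof (rule finite_subset)
  show "{G. proper_open_face G} \<subseteq> rel_interior ` {F. F face_of (Pset :: (real^'n) set)}"
    unfolding proper_open_face_iff by blast
qed (use finite_polyhedron_faces[OF polyhedron_Pset] in blast)

lemma image_proper_open_face:
  fixes A :: "real^'n^'n"
  assumes A: "\<forall>x. normP (A *v x) \<le> normP x" and G: "proper_open_face G"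
  shows "(\<lambda>x. A *v x) ` G \<subseteq> interior Pset \<or> (\<exists>G'. proper_open_face G' \<and> (\<lambda>x. A *v x) ` G \<subseteq> G')"
proof -
  obtain F where F: "F face_of Pset" "F \<noteq> {}" "G = rel_interior F"
    using G unfolding proper_open_face_iff by blast
  have AP: "(\<lambda>x. A *v x) ` Pset \<subseteq> Pset" using A order_trans by (fastforce simp: Pset_def)
  obtain F' where F': "F' face_of Pset" "(\<lambda>x. A *v x) ` G \<subseteq> rel_interior F'"
    using linear_image_rel_interior_face[OF polyhedron_Pset matrix_vector_mul_linear AP F(1,2)] F(3) by blast
  moreover have "F' \<noteq> {}" using F'(2) proper_open_face_nonempty[OF G] rel_interior_subset[of F'] by blast
  ultimately show ?thesis
    by (cases "F' = Pset") (auto simp: rel_interior_Pset proper_open_face_iff)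
qed

lemma graph_of_faces_from_node1: "(None, v) \<in> graph_of_faces S \<Longrightarrow> v = None"
  unfolding graph_of_faces_def face_node_def by auto

lemma rtrancl_graph_of_faces_from_node1: "(None, v) \<in> (graph_of_faces S)\<^sup>* \<Longrightarrow> v = None"
  by (induction rule: rtrancl_induct) (auto dest: graph_of_faces_from_node1)

lemma graph_of_faces_edgeI:
  assumes "proper_open_face G" "proper_open_face G'" "A \<in> S" "(\<lambda>x. A *v x) ` G \<subseteq> G'"
  shows "(face_node G, face_node G') \<in> graph_of_faces S"
  using assms unfolding graph_of_faces_def by blast

lemma graph_of_faces_edgeE:
  assumes "(face_node G, face_node G') \<in> graph_of_faces S"
  obtains A where "A \<in> S" "\<And>x. x \<in> G \<or> - x \<in> G \<Longrightarrow> A *v x \<in> G' \<or> - (A *v x) \<in> G'"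
proof -
  have pair: "G = H \<or> G = uminus ` H" if "face_node G = face_node H" for G H :: "(real^'n) set"
    using that unfolding face_node_def by (auto simp: doubleton_eq_iff)
  obtain Fi Fj A where F: "face_node G = face_node Fi" "face_node G' = face_node Fj" "A \<in> S"
    "(\<lambda>x. A *v x) ` Fi \<subseteq> Fj \<union> uminus ` Fj"
    using assms unfolding graph_of_faces_def by (auto simp: face_node_def)
  have "A *v x \<in> G' \<or> - (A *v x) \<in> G'" if "x \<in> G \<or> - x \<in> G" for x
  proof -
    have "x \<in> Fi \<or> - x \<in> Fi" using pair[OF F(1)] that by auto
    then have "A *v x \<in> Fj \<union> uminus ` Fj \<or> - (A *v x) \<in> Fj \<union> uminus ` Fj"
      using F(4) matrix_vector_mult_diff_distrib[of A 0 x] by force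
    then show ?thesis using pair[OF F(2)] by (auto simp: image_iff) (metis minus_minus)
  qed
  then show ?thesis using that F(3) by blast
qed

lemma trancl_cycle_successor:
  assumes "(u, u) \<in> R\<^sup>+"
  obtains u' where "(u, u') \<in> R" "(u', u') \<in> R\<^sup>+" "(u', u) \<in> R\<^sup>*"
  using assms by (meson rtrancl_into_trancl1 tranclD)

lemma walk_trancl:
  assumes "\<forall>k<j. (w k, w (Suc k)) \<in> R" "i < j"
  shows "(w i, w j) \<in> R\<^sup>+"
  using assms
proof (induction j)
  case (Suc j)
  then show ?case by (cases "i = j") (auto intro: trancl_into_trancl)
qed simp

lemma long_walk_has_cycle:
  assumes V: "finite V" "card V \<le> L" and w: "\<forall>i\<le>L. w i \<in> V" "\<forall>i<L. (w i, w (Suc i)) \<in> R"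
  obtains i where "i \<le> L" "(w i, w i) \<in> R\<^sup>+"
proof -
  have "w ` {0..L} \<subseteq> V" using w(1) by auto
  then have "\<not> inj_on w {0..L}" using card_inj_on_le[OF _ _ V(1)] V(2) by fastforce
  then obtain i j where ij: "i < j" "j \<le> L" "w i = w j"
    unfolding inj_on_def by (metis atLeastAtMost_iff le0 linorder_neqE_nat)
  then have "(w i, w i) \<in> R\<^sup>+" using walk_trancl[of j w R i] w(2) by auto
  then show ?thesis using that ij by simp
qed

lemma trajectory_in_invariant_set:
  assumes step: "\<And>x. I x \<Longrightarrow> \<exists>A\<in>S. I (A *v x)" and "I x0"
  obtains \<sigma> where "\<forall>t. \<sigma> t \<in> S" "\<forall>t. I (traj \<sigma> x0 t)"
proof -
  obtain g where g: "\<And>x. I x \<Longrightarrow> g x \<in> S \<and> I (g x *v x)" using step by metis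
  define xs where "xs = rec_nat x0 (\<lambda>_ x. g x *v x)"
  have I_xs: "I (xs t)" for t by (induction t) (use \<open>I x0\<close> g in \<open>auto simp: xs_def\<close>)
  have "traj (\<lambda>t. g (xs t)) x0 t = xs t" for t by (induction t) (auto simp: xs_def)
  then show ?thesis using that[of "\<lambda>t. g (xs t)"] I_xs g by auto
qed

lemma traj_shift: "traj \<tau> x (s + n) = traj (\<lambda>t. \<tau> (s + t)) (traj \<tau> x s) n"
  by (induction n) auto

lemma traj_cong: "(\<forall>t<n. \<tau> t = \<tau>' t) \<Longrightarrow> traj \<tau> x n = traj \<tau>' x n"
  by (induction n) auto

lemma traj_affine:
  "(\<forall>t<n. \<tau> t *v ones = ones) \<Longrightarrow> traj \<tau> (a *\<^sub>R x + b *\<^sub>R ones) n = a *\<^sub>R traj \<tau> x n + b *\<^sub>R ones"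
  by (induction n) (auto simp: matrix_vector_right_distrib matrix_vector_mult_scaleR)

lemma continuous_on_traj: "continuous_on U (\<lambda>x. traj \<tau> x n)"
  by (induction n) (auto intro: continuous_on_compose2[OF matrix_vector_mult_linear_continuous_on])

lemma normP_traj_antimono:
  assumes "\<forall>A\<in>S. \<forall>x. normP (A *v x) \<le> normP x" "\<forall>t<L. \<tau> t \<in> S" "t \<le> s" "s \<le> L"
  shows "normP (traj \<tau> x s) \<le> normP (traj \<tau> x t)"
  using assms(3,4)
proof (induction s)
  case (Suc s)
  show ?case
  proof (cases "t = Suc s")
    case False
    then have "normP (traj \<tau> x s) \<le> normP (traj \<tau> x t)" using Suc by simp
    moreover have "normP (traj \<tau> x (Suc s)) \<le> normP (traj \<tau> x s)" using assms(1,2) Suc.prems by simp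
    ultimately show ?thesis by linarith
  qed simp
qed simp

section \<open>A cycle through a face prevents consensus\<close>

lemma cycle_gives_boundary_trajectory:
  fixes S :: "(real^'n^'n) set"
  assumes "(v, v) \<in> (graph_of_faces S)\<^sup>+" "v \<noteq> None"
  obtains \<sigma> x0 where "\<forall>t. \<sigma> t \<in> S" "\<forall>t. normP (traj \<sigma> x0 t) = 1"
proof -
  let ?E = "graph_of_faces S"
  define I where "I x \<longleftrightarrow> (\<exists>G. proper_open_face G \<and> (face_node G, face_node G) \<in> ?E\<^sup>+ \<and> (x \<in> G \<or> - x \<in> G))"
    for x :: "real^'n"
  have step: "\<exists>A\<in>S. I (A *v x)" if "I x" for x
  proof -
    obtain G where G: "proper_open_face G" "(face_node G, face_node G) \<in> ?E\<^sup>+" "x \<in> G \<or> - x \<in> G"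
      using \<open>I x\<close> unfolding I_def by blast
    obtain u where u: "(face_node G, u) \<in> ?E" "(u, u) \<in> ?E\<^sup>+" "(u, face_node G) \<in> ?E\<^sup>*"
      using trancl_cycle_successor[OF G(2)] by blast
    have "u \<noteq> None" using u(3) rtrancl_graph_of_faces_from_node1 by (force simp: face_node_def)
    then obtain G' where G': "proper_open_face G'" "u = face_node G'"
      using u(1) unfolding graph_of_faces_def by (auto simp: face_node_def)
    then show ?thesis
      using graph_of_faces_edgeE[of G G' S] u G(3) unfolding I_def by metis
  qed
  obtain G where G: "proper_open_face G" "v = face_node G"
    using assms tranclD[OF assms(1)] unfolding graph_of_faces_def by auto
  obtain x0 where "x0 \<in> G" using proper_open_face_nonempty[OF G(1)] by blast
  then have "I x0" using G assms(1) unfolding I_def by blast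
  then obtain \<sigma> where "\<forall>t. \<sigma> t \<in> S" "\<forall>t. I (traj \<sigma> x0 t)"
    using trajectory_in_invariant_set[of I S] step by blast
  moreover have "normP x = 1" if "I x" for x
    using that normP_proper_open_face normP_uminus unfolding I_def by metis
  ultimately show ?thesis using that by blast
qed

lemma consensus_imp_only_cycle_is_node1_loop:
  fixes S :: "(real^'n^'n) set"
  assumes "\<forall>x0 \<sigma>. (\<forall>t. \<sigma> t \<in> S) \<longrightarrow> (\<exists>c::real. traj \<sigma> x0 \<longlonglongrightarrow> c *\<^sub>R ones)"
  shows "only_cycle_is_node1_loop S"
  unfolding only_cycle_is_node1_loop_def
proof (intro allI impI, rule ccontr)
  fix v assume "(v, v) \<in> (graph_of_faces S)\<^sup>+" "v \<noteq> None"
  then obtain \<sigma> x0 where \<sigma>: "\<forall>t. \<sigma> t \<in> S" "\<forall>t. normP (traj \<sigma> x0 t) = 1"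
    by (rule cycle_gives_boundary_trajectory)
  obtain c where "traj \<sigma> x0 \<longlonglongrightarrow> c *\<^sub>R ones" using assms \<sigma>(1) by blast
  then have "(\<lambda>t. normP (traj \<sigma> x0 t)) \<longlonglongrightarrow> normP (c *\<^sub>R (ones :: real^'n))"
    by (rule isCont_tendsto_compose[OF isCont_normP])
  then show False using \<sigma>(2) by (simp add: normP_scaleR_ones LIMSEQ_const_iff)
qed

section \<open>Without such cycles the seminorm contracts uniformly\<close>

lemma boundary_trajectory_walk:
  assumes nonexp: "\<forall>A\<in>S. \<forall>x. normP (A *v x) \<le> normP x" and \<tau>: "\<forall>t<L. \<tau> t \<in> S"
    and one: "\<forall>t\<le>L. normP (traj \<tau> x t) = 1"
  obtains w where "\<forall>i\<le>L. w i \<in> face_node ` {G. proper_open_face G}"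
    "\<forall>i<L. (w i, w (Suc i)) \<in> graph_of_faces S"
proof -
  let ?V = "face_node ` {G. proper_open_face G}"
  have "\<exists>w G. (\<forall>i\<le>t. w i \<in> ?V) \<and> (\<forall>i<t. (w i, w (Suc i)) \<in> graph_of_faces S) \<and>
      proper_open_face G \<and> w t = face_node G \<and> traj \<tau> x t \<in> G" if "t \<le> L" for t
    using that
  proof (induction t)
    case 0
    have "normP x = 1" using one[rule_format, of 0] by simp
    then obtain G where "proper_open_face G" "x \<in> G" by (rule proper_open_face_cover)
    then show ?case by (intro exI[of _ "\<lambda>_. face_node G"] exI[of _ G]) auto
  next
    case (Suc t)
    then obtain w G where w: "\<forall>i\<le>t. w i \<in> ?V" "\<forall>i<t. (w i, w (Suc i)) \<in> graph_of_faces S"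
      and G: "proper_open_face G" "w t = face_node G" "traj \<tau> x t \<in> G" by auto
    have A: "\<tau> t \<in> S" using \<tau> Suc.prems by auto
    have "traj \<tau> x (Suc t) \<notin> interior Pset"
      using one[rule_format, OF Suc.prems] unfolding interior_Pset by simp
    then obtain G' where G': "proper_open_face G'" "(\<lambda>y. \<tau> t *v y) ` G \<subseteq> G'"
      using image_proper_open_face[of "\<tau> t" G] A nonexp G(1,3) by auto
    have "(face_node G, face_node G') \<in> graph_of_faces S" by (rule graph_of_faces_edgeI[OF G(1) G'(1) A G'(2)])
    then show ?case using w G G'
      by (intro exI[of _ "w(Suc t := face_node G')"] exI[of _ G']) (auto simp: le_Suc_eq less_Suc_eq)
  qed
  then show ?thesis using that by blast
qed

lemma only_cycle_imp_leaves_boundary: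
  fixes S :: "(real^'n^'n) set"
  assumes nonexp: "\<forall>A\<in>S. \<forall>x. normP (A *v x) \<le> normP x" and oc: "only_cycle_is_node1_loop S"
    and L: "card (face_node ` {G :: (real^'n) set. proper_open_face G}) < L"
    and \<tau>: "\<forall>t<L. \<tau> t \<in> S" and x: "normP (x :: real^'n) \<le> 1"
  shows "normP (traj \<tau> x L) < 1"
proof (rule ccontr)
  assume "\<not> normP (traj \<tau> x L) < 1"
  then have "\<forall>t\<le>L. normP (traj \<tau> x t) = 1"
    using normP_traj_antimono[OF nonexp \<tau>] x by (smt (verit) le0 order_refl traj.simps(1))
  then obtain w where w: "\<forall>i\<le>L. w i \<in> face_node ` {G :: (real^'n) set. proper_open_face G}"
    "\<forall>i<L. (w i, w (Suc i)) \<in> graph_of_faces S"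
    using boundary_trajectory_walk[OF nonexp \<tau>] by blast
  have card: "card (face_node ` {G :: (real^'n) set. proper_open_face G}) \<le> L" using L by simp
  obtain i where "i \<le> L" "(w i, w i) \<in> (graph_of_faces S)\<^sup>+"
    by (rule long_walk_has_cycle[OF finite_imageI[OF finite_proper_open_faces] card w])
  moreover have "w i \<noteq> None" using w(1) \<open>i \<le> L\<close> by (auto simp: face_node_def)
  moreover have "(w i, w i) \<in> (graph_of_faces S)\<^sup>+ \<longrightarrow> w i = None"
    using oc unfolding only_cycle_is_node1_loop_def by (rule spec)
  ultimately show False by simp
qed

text \<open>Every vector is \<open>c x' + d \<one>\<close> with \<open>c = \<parallel>x\<parallel>\<^sub>\<P>\<close> and \<open>x'\<close> in the compact set \<open>Pbox\<close>.\<close>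

definition Pbox :: "(real^'n) set" where
  "Pbox = Pset \<inter> cbox (- (2 *\<^sub>R ones)) (2 *\<^sub>R ones)"

lemma compact_Pbox: "compact Pbox"
  unfolding Pbox_def
  using compact_Int_closed[OF compact_cbox polyhedron_imp_closed[OF polyhedron_Pset]]
  by (simp add: Int_commute)

lemma zero_in_Pbox: "0 \<in> Pbox"
  by (simp add: Pbox_def Pset_def mem_box_cart ones_def normP_zero)

lemma normalize_into_Pbox:
  fixes x :: "real^'n"
  assumes "normP x > 0"
  obtains x' d where "x' \<in> Pbox" "x = normP x *\<^sub>R x' + d *\<^sub>R ones"
proof -
  define r where "r = normP x"
  define k :: 'n where "k = undefined"
  define x' where "x' = (1/r) *\<^sub>R x + (- (x $ k) / r) *\<^sub>R ones"
  have r: "r > 0" using assms r_def by simp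
  have "normP x' = 1" unfolding x'_def by (subst normP_affine) (use r in \<open>auto simp: r_def\<close>)
  moreover have "\<bar>x' $ i\<bar> \<le> 2" for i
    using entry_diff_le_normP[of x i k] entry_diff_le_normP[of x k i] r
    by (simp add: x'_def ones_def r_def abs_le_iff field_simps)
  then have "- 2 \<le> x' $ i \<and> x' $ i \<le> 2" for i by (metis abs_le_iff minus_le_iff)
  ultimately have "x' \<in> Pbox" by (simp add: Pbox_def Pset_def mem_box_cart ones_def)
  moreover have "normP x *\<^sub>R x' = x - (x $ k) *\<^sub>R ones"
    using r by (simp add: x'_def r_def scaleR_diff_right)
  then have "x = normP x *\<^sub>R x' + (x $ k) *\<^sub>R ones" by simp
  ultimately show ?thesis using that by blast
qed

lemma contraction_from_Pbox:
  assumes ones: "\<forall>t<L. \<tau> t *v ones = ones" and bound: "\<forall>y\<in>Pbox. normP (traj \<tau> y L) \<le> q"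
  shows "normP (traj \<tau> x L) \<le> q * normP x"
proof (cases "normP x = 0")
  case True
  then obtain c where "x = c *\<^sub>R ones" using normP_eq_0_iff by blast
  then have "traj \<tau> x L = c *\<^sub>R ones" using traj_affine[OF ones, of 0 0 c] by simp
  then show ?thesis using True by (simp add: normP_scaleR_ones)
next
  case False
  then have "normP x > 0" using normP_nonneg[of x] by simp
  then obtain x' d where x': "x' \<in> Pbox" "x = normP x *\<^sub>R x' + d *\<^sub>R ones"
    by (rule normalize_into_Pbox)
  have "traj \<tau> x L = normP x *\<^sub>R traj \<tau> x' L + d *\<^sub>R ones"
    using traj_affine[OF ones, of "normP x" x' d] unfolding x'(2)[symmetric] .
  then have "normP (traj \<tau> x L) = normP x * normP (traj \<tau> x' L)"
    by (simp add: normP_affine[OF normP_nonneg])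
  also have "\<dots> \<le> normP x * q"
    using bound x'(1) normP_nonneg[of x] by (simp add: mult_left_mono)
  finally show ?thesis by (simp add: mult.commute)
qed

lemma finite_uniform_bound_lt_1:
  assumes "finite W" "\<forall>w\<in>W. \<exists>q<1. \<forall>y\<in>K. f w y \<le> q"
  shows "\<exists>q. 0 < q \<and> q < 1 \<and> (\<forall>w\<in>W. \<forall>y\<in>K. f w y \<le> (q::real))"
  using assms
proof (induction W rule: finite_induct)
  case empty
  show ?case by (intro exI[of _ "1/2"]) simp
next
  case (insert w W)
  obtain q where q: "0 < q" "q < 1" "\<forall>w\<in>W. \<forall>y\<in>K. f w y \<le> q" using insert.IH insert.prems by blast
  obtain q' where q': "q' < 1" "\<forall>y\<in>K. f w y \<le> q'" using insert.prems by blast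
  show ?case using q q' by (intro exI[of _ "max q q'"]) (auto simp: le_max_iff_disj)
qed

lemma continuous_on_normP_traj: "continuous_on U (\<lambda>x. normP (traj \<tau> x n))"
  by (rule continuous_on_compose2[OF continuous_on_normP[of UNIV] continuous_on_traj]) simp

lemma uniform_contraction:
  fixes S :: "(real ^ 'n ^ 'n) set"
  assumes fin: "finite S" and ones: "\<forall>A\<in>S. A *v ones = ones"
    and nonexp: "\<forall>A\<in>S. \<forall>x. normP (A *v x) \<le> normP x" and oc: "only_cycle_is_node1_loop S"
  obtains q L where "0 < q" "q < 1" "0 < L"
    "\<And>\<tau> (x :: real^'n) s. \<forall>t. \<tau> t \<in> S \<Longrightarrow> normP (traj \<tau> x (s + L)) \<le> q * normP (traj \<tau> x s)"
proof -
  define L where "L = card (face_node ` {G :: (real^'n) set. proper_open_face G}) + 1"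
  define W where "W = {ws. set ws \<subseteq> S \<and> length ws = L}"
  have "finite W" unfolding W_def by (rule finite_lists_length_eq[OF fin])
  have "Pbox \<noteq> {}" using zero_in_Pbox by blast
  have word_bound: "\<exists>q<1. \<forall>y\<in>Pbox. normP (traj ((!) ws) y L) \<le> q" if "ws \<in> W" for ws
  proof -
    have ws: "\<forall>t<L. ws ! t \<in> S" using that unfolding W_def by auto
    obtain z where z: "z \<in> Pbox" "\<forall>y\<in>Pbox. normP (traj ((!) ws) y L) \<le> normP (traj ((!) ws) z L)"
      using continuous_attains_sup[OF compact_Pbox \<open>Pbox \<noteq> {}\<close> continuous_on_normP_traj] by blast
    have "normP z \<le> 1" using z(1) by (simp add: Pbox_def Pset_def)
    moreover have "card (face_node ` {G :: (real^'n) set. proper_open_face G}) < L" by (simp add: L_def)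
    ultimately have "normP (traj ((!) ws) z L) < 1"
      using only_cycle_imp_leaves_boundary[OF nonexp oc _ ws] by blast
    then show ?thesis using z(2) by blast
  qed
  obtain q where q: "0 < q" "q < 1" "\<forall>ws\<in>W. \<forall>y\<in>Pbox. normP (traj ((!) ws) y L) \<le> q"
    using finite_uniform_bound_lt_1[OF \<open>finite W\<close>, of Pbox "\<lambda>ws y. normP (traj ((!) ws) y L)"] word_bound
    by blast
  have main: "normP (traj \<tau> x (s + L)) \<le> q * normP (traj \<tau> x s)" if \<tau>: "\<forall>t. \<tau> t \<in> S" for \<tau> x s
  proof -
    define ws where "ws = map (\<lambda>t. \<tau> (s + t)) [0..<L]"
    have "ws \<in> W" using \<tau> by (auto simp: ws_def W_def)
    then have "\<forall>y\<in>Pbox. normP (traj ((!) ws) y L) \<le> q" using q(3) by blast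
    moreover have "\<forall>t<L. ws ! t *v ones = ones" using ones \<tau> by (simp add: ws_def)
    moreover have "traj \<tau> x (s + L) = traj ((!) ws) (traj \<tau> x s) L"
      unfolding traj_shift by (rule traj_cong) (simp add: ws_def)
    ultimately show ?thesis using contraction_from_Pbox by metis
  qed
  show ?thesis by (rule that[OF q(1,2) _ main]) (simp add: L_def)
qed

lemma decseq_periodic_contraction_geometric:
  fixes a :: "nat \<Rightarrow> real"
  assumes dec: "decseq a" and a0: "a 0 \<ge> 0" and step: "\<And>s. a (s + L) \<le> q * a s"
    and q: "0 < q" "q < 1" and L: "0 < L"
  obtains \<rho> where "0 < \<rho>" "\<rho> < 1" "\<And>t. a t \<le> (a 0 / q) * \<rho> ^ t"
proof -
  define \<rho> where "\<rho> = root L q"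
  have \<rho>: "0 < \<rho>" "\<rho> < 1" unfolding \<rho>_def using q L by (simp_all add: real_root_gt_zero)
  have \<rho>L: "\<rho> ^ L = q" unfolding \<rho>_def using q L real_root_pow_pos by blast
  have periods: "a (m * L) \<le> q ^ m * a 0" for m
  proof (induction m)
    case (Suc m)
    have "a (Suc m * L) \<le> q * a (m * L)" using step[of "m * L"] by (simp add: add.commute)
    also have "\<dots> \<le> q * (q ^ m * a 0)" using Suc q by (intro mult_left_mono) auto
    finally show ?case by simp
  qed simp
  have "a t \<le> (a 0 / q) * \<rho> ^ t" for t
  proof -
    have "t \<le> L + L * (t div L)" using dividend_less_times_div[OF L, of t] by simp
    then have "q * q ^ (t div L) \<le> \<rho> ^ t"
      using power_decreasing[of t "L + L * (t div L)" \<rho>] \<rho> by (simp add: power_add power_mult \<rho>L)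
    then have "q ^ (t div L) \<le> \<rho> ^ t / q" using q(1) by (simp add: le_divide_eq mult.commute)
    have "a t \<le> a (t div L * L)" using dec by (simp add: decseq_def)
    also have "\<dots> \<le> q ^ (t div L) * a 0" by (rule periods)
    also have "\<dots> \<le> (\<rho> ^ t / q) * a 0" using \<open>q ^ (t div L) \<le> \<rho> ^ t / q\<close> a0 by (rule mult_right_mono)
    finally show ?thesis by (simp add: mult.commute)
  qed
  with \<rho> show ?thesis by (rule that)
qed

lemma convergent_if_geometric_increments:
  fixes X :: "nat \<Rightarrow> 'a::banach"
  assumes "\<And>t. norm (X (Suc t) - X t) \<le> K * \<rho> ^ t" "0 \<le> \<rho>" "\<rho> < 1"
  shows "convergent X"
proof -
  have "summable (\<lambda>t. norm (X (Suc t) - X t))"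
    by (rule summable_comparison_test[OF _ summable_mult[OF summable_geometric]]) (use assms in auto)
  then have "convergent (\<lambda>n. X 0 + (\<Sum>t<n. X (Suc t) - X t))"
    by (intro convergent_add convergent_const) (simp add: summable_norm_cancel flip: summable_iff_convergent)
  then show ?thesis by (simp add: sum_lessThan_telescope)
qed

lemma norm_step_le_normP:
  fixes A :: "real^'n^'n"
  assumes "A *v ones = ones"
  shows "norm (A *v x - x) \<le> (onorm ((*v) A) + 1) * (2 * real CARD('n)) * normP x"
proof -
  define y where "y = x - (x $ undefined) *\<^sub>R ones"
  have "\<bar>y $ i\<bar> \<le> 2 * normP x" for i
    using entry_diff_le_normP[of x i undefined] entry_diff_le_normP[of x undefined i]
    by (simp add: y_def ones_def)
  then have "(\<Sum>i\<in>UNIV. \<bar>y $ i\<bar>) \<le> (\<Sum>i\<in>(UNIV :: 'n set). 2 * normP x)" by (rule sum_mono)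
  then have ny: "norm y \<le> 2 * real CARD('n) * normP x" using norm_le_l1_cart[of y] by simp
  have "A *v x - x = A *v y - y"
    using assms by (simp add: y_def matrix_vector_mult_diff_distrib matrix_vector_mult_scaleR)
  then have "norm (A *v x - x) \<le> onorm ((*v) A) * norm y + norm y"
    using norm_triangle_ineq4[of "A *v y" y] onorm[OF matrix_vector_mul_bounded_linear, of A y] by simp
  also have "\<dots> = (onorm ((*v) A) + 1) * norm y" by (simp add: algebra_simps)
  also have "\<dots> \<le> (onorm ((*v) A) + 1) * (2 * real CARD('n) * normP x)"
    using ny onorm_pos_le[OF matrix_vector_mul_bounded_linear, of A] by (intro mult_left_mono) auto
  finally show ?thesis by (simp add: mult.assoc)
qed

lemma only_cycle_imp_consensus:
  fixes S :: "(real ^ 'n ^ 'n) set"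
  assumes fin: "finite S" and ones: "\<forall>A\<in>S. A *v ones = ones"
    and nonexp: "\<forall>A\<in>S. \<forall>x. normP (A *v x) \<le> normP x" and oc: "only_cycle_is_node1_loop S"
    and \<sigma>: "\<forall>t. \<sigma> t \<in> S"
  shows "\<exists>c. traj \<sigma> x0 \<longlonglongrightarrow> c *\<^sub>R ones"
proof -
  define X where "X = traj \<sigma> x0"
  obtain q L where qL: "0 < q" "q < 1" "0 < L"
    and contr: "\<And>\<tau> (x :: real^'n) s. \<forall>t. \<tau> t \<in> S \<Longrightarrow> normP (traj \<tau> x (s + L)) \<le> q * normP (traj \<tau> x s)"
    using uniform_contraction[OF fin ones nonexp oc] by blast
  have step: "normP (X (s + L)) \<le> q * normP (X s)" for s unfolding X_def by (rule contr[OF \<sigma>])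
  have "decseq (\<lambda>t. normP (X t))" using nonexp \<sigma> by (intro decseq_SucI) (simp add: X_def)
  then obtain \<rho> where \<rho>: "0 < \<rho>" "\<rho> < 1" and decay: "\<And>t. normP (X t) \<le> (normP (X 0) / q) * \<rho> ^ t"
    using decseq_periodic_contraction_geometric[where a="\<lambda>t. normP (X t)", OF _ normP_nonneg step qL] by blast
  define C where "C = (\<Sum>A\<in>S. (onorm ((*v) A) + 1) * (2 * real CARD('n)))"
  have C: "0 \<le> C" unfolding C_def by (intro sum_nonneg) (simp add: onorm_pos_le[OF matrix_vector_mul_bounded_linear])
  have "norm (X (Suc t) - X t) \<le> C * normP (X t)" for t
  proof -
    have "norm (X (Suc t) - X t) \<le> (onorm ((*v) (\<sigma> t)) + 1) * (2 * real CARD('n)) * normP (X t)"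
      using norm_step_le_normP[of "\<sigma> t" "X t"] ones \<sigma> by (simp add: X_def)
    also have "\<dots> \<le> C * normP (X t)" unfolding C_def using fin \<sigma> normP_nonneg
      by (intro mult_right_mono member_le_sum) (simp_all add: onorm_pos_le[OF matrix_vector_mul_bounded_linear])
    finally show ?thesis .
  qed
  then have "norm (X (Suc t) - X t) \<le> (C * (normP (X 0) / q)) * \<rho> ^ t" for t
    using order_trans[OF _ mult_left_mono[OF decay C]] by (simp add: mult.assoc)
  then have "convergent X" by (rule convergent_if_geometric_increments) (use \<rho> in auto)
  then obtain z where z: "X \<longlonglongrightarrow> z" unfolding convergent_def by blast
  have "(\<lambda>t. normP (X t)) \<longlonglongrightarrow> normP z" using isCont_tendsto_compose[OF isCont_normP z] .
  moreover have "(\<lambda>t. normP (X t)) \<longlonglongrightarrow> 0"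
  proof (rule Lim_null_comparison[OF always_eventually])
    show "\<forall>t. norm (normP (X t)) \<le> (normP (X 0) / q) * \<rho> ^ t"
      using decay by (simp add: abs_of_nonneg normP_nonneg)
    show "(\<lambda>t. (normP (X 0) / q) * \<rho> ^ t) \<longlonglongrightarrow> 0"
      using \<rho> by (intro tendsto_mult_right_zero LIMSEQ_power_zero) simp
  qed
  ultimately have "normP z = 0" using LIMSEQ_unique by blast
  then obtain c where "z = c *\<^sub>R ones" using normP_eq_0_iff by blast
  then show ?thesis using z unfolding X_def by blast
qed

theorem theorem1:
  fixes S :: "(real ^ 'n ^ 'n) set"
  assumes "CARD('n) \<ge> 2"
    and "finite S"
    and "\<forall>A\<in>S. A *v ones = ones"
    and "\<forall>A\<in>S. \<forall>x. normP (A *v x) \<le> normP x"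
  shows "(\<forall>x0 \<sigma>. (\<forall>t. \<sigma> t \<in> S) \<longrightarrow> (\<exists>c::real. traj \<sigma> x0 \<longlonglongrightarrow> c *\<^sub>R ones))
         \<longleftrightarrow> only_cycle_is_node1_loop S"
  using consensus_imp_only_cycle_is_node1_loop only_cycle_imp_consensus[OF assms(2-4)] by blast

end
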